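(* Let $n\ge 2$ be odd, $\pi=A_1\cdots A_n\in\mathbb{S}_{2n}$ with $A_i=(2i-1\ \ 2i)$, and $\mathcal{O}_\pi$ its conjugacy class. If $\rho=\chi_{(n)}\otimes\epsilon$ or $\rho=\chi_{(n)}\otimes\mathrm{sgn}$, then the braiding of $M(\mathcal{O}_\pi,\rho)$ is negative.
   Context: Permutations are composed right to left. For a finite group $G$, a conjugacy class $\mathcal{C}$, a fixed $s\in\mathcal{C}$ with centralizer $G^s$ and an irreducible representation $(\rho,V)$ of $G^s$, $M(\mathcal{C},\rho)$ is the irreducible Yetter–Drinfeld module over $\mathbb{C}G$: enumerate $\mathcal{C}=\{t_1=s,\dots,t_M\}$, choose $g_i\in G$ with $g_isg_i^{-1}=t_i$; $M(\mathcal{C},\rho)=\bigoplus_i g_i\otimes V$ with grading $\deg(g_i\otimes v)=t_i$, action $g\cdot(g_i\otimes v)=g_j\otimes\rho(\gamma)v$ where $gg_i=g_j\gamma$, $\gamma\in G^s$, and braiding $c((g_i\otimes v)\otimes(g_j\otimes w))=(g_h\otimes\rho(\gamma)w)\otimes(g_i\otimes v)$ where $t_ig_j=g_h\gamma$, $\gamma\in G^s$. When $\rho$ is one-dimensional, the braiding is called negative if for all $i,j$ with $t_it_j=t_jt_i$, setting $q_{ij}:=\rho(g_j^{-1}t_ig_j)$, one has $q_{ii}=-1$ and $q_{ij}q_{ji}=1$. The centralizer is $\mathbb{S}_{2n}^\pi=\langle A_1,\dots,A_n\rangle\rtimes\langle B_1,\dots,B_{n-1}\rangle\cong\mathbb{Z}_2^n\rtimes\mathbb{S}_n$,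 where $B_j=(2j-1\ \ 2j+1)(2j\ \ 2j+2)$ corresponds to $(j\ j+1)\in\mathbb{S}_n$. $\chi_{(n)}\otimes\epsilon$ (resp. $\chi_{(n)}\otimes\mathrm{sgn}$) is the one-dimensional representation with $A_i\mapsto-1$ for all $i$ and $B_j\mapsto1$ (resp. $B_j\mapsto-1$) for all $j$. *)

theory Defs
  imports Complex_Main "HOL-Combinatorics.Combinatorics"
begin

text \<open>Permutations of {1..2n} are functions nat => nat that permute {1..2*n};
  composition is right to left: (p o q) x = p (q x).\<close>

definition Sym :: "nat \<Rightarrow> (nat \<Rightarrow> nat) set" where
  "Sym n = {p. p permutes {1..2*n}}"

definition Aperm :: "nat \<Rightarrow> nat \<Rightarrow> nat" where
  "Aperm i = transpose (2*i - 1) (2*i)"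

definition Bperm :: "nat \<Rightarrow> nat \<Rightarrow> nat" where
  "Bperm j = transpose (2*j - 1) (2*j + 1) \<circ> transpose (2*j) (2*j + 2)"

definition piperm :: "nat \<Rightarrow> nat \<Rightarrow> nat" where
  "piperm n = foldr (\<lambda>i f. Aperm i \<circ> f) [1..<n+1] id"

definition conj_class :: "('a \<Rightarrow> 'a) set \<Rightarrow> ('a \<Rightarrow> 'a) \<Rightarrow> ('a \<Rightarrow> 'a) set" where
  "conj_class G s = {g \<circ> s \<circ> inv g | g. g \<in> G}"

definition centralizer :: "('a \<Rightarrow> 'a) set \<Rightarrow> ('a \<Rightarrow> 'a) \<Rightarrow> ('a \<Rightarrow> 'a) set" where
  "centralizer G s = {g \<in> G. g \<circ> s = s \<circ> g}"

text \<open>Negative braiding of M(C, rho), rho one-dimensional on the centralizer of s: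
  for every t_i, t_j in the class with t_i t_j = t_j t_i and every choice of
  g_i, g_j in G with g_i s g_i^{-1} = t_i, g_j s g_j^{-1} = t_j, with
  q_ij = rho(g_j^{-1} t_i g_j): q_ii = -1 and q_ij q_ji = 1.\<close>
definition negative_braiding ::
  "('a \<Rightarrow> 'a) set \<Rightarrow> ('a \<Rightarrow> 'a) \<Rightarrow> (('a \<Rightarrow> 'a) \<Rightarrow> complex) \<Rightarrow> bool" where
  "negative_braiding G s \<rho> \<longleftrightarrow>
     (\<forall>t \<in> conj_class G s. \<forall>g \<in> G. g \<circ> s \<circ> inv g = t \<longrightarrow> \<rho> (inv g \<circ> t \<circ> g) = -1) \<and>
     (\<forall>t \<in> conj_class G s. \<forall>u \<in> conj_class G s. \<forall>g \<in> G. \<forall>h \<in> G.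
        t \<circ> u = u \<circ> t \<longrightarrow> g \<circ> s \<circ> inv g = t \<longrightarrow> h \<circ> s \<circ> inv h = u \<longrightarrow>
        \<rho> (inv h \<circ> t \<circ> h) * \<rho> (inv g \<circ> u \<circ> g) = 1)"

end

theory Submission
  imports Defs
begin

(* Write s for pi. Since rho (A_i) = -1, rho (s) = (-1)^n = -1, which gives q_ii = -1. For commuting
   conjugates t_i, t_j of s, both Y = g_j^-1 t_i g_j and Z = g_i^-1 t_j g_i are involutions in the
   centralizer of s, so q_ij = rho (Y) is a sign, and q_ij q_ji = 1 follows once Y and Z are conjugate
   inside the centralizer. As s and Y are commuting fixed-point-free involutions, some permutation w
   interchanges them by conjugation; then c = g_i^-1 g_j w centralizes s and conjugates Y to Z.
   The values of rho on the B_j are never needed. *)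

lemma involution_permutes:
  assumes "\<And>x. f (f x) = x" and "\<And>x. x \<notin> S \<Longrightarrow> f x = x"
  shows "f permutes S"
  unfolding permutes_def using assms by metis

definition fpf_involution_on :: "'a set \<Rightarrow> ('a \<Rightarrow> 'a) \<Rightarrow> bool" where
  "fpf_involution_on S s \<longleftrightarrow> s permutes S \<and> (\<forall>p. s (s p) = p) \<and> (\<forall>p \<in> S. s p \<noteq> p)"

lemma fpf_involution_on_conj:
  assumes s: "fpf_involution_on S s" and k: "k permutes S"
  shows "fpf_involution_on S (k \<circ> s \<circ> inv k)"
  unfolding fpf_involution_on_def
proof (intro conjI allI ballI)
  have "s permutes S" and ss: "\<And>p. s (s p) = p" and fpf: "\<And>p. p \<in> S \<Longrightarrow> s p \<noteq> p"
    using s by (auto simp: fpf_involution_on_def)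
  then show "k \<circ> s \<circ> inv k permutes S"
    by (intro permutes_compose permutes_inv k)
  show "(k \<circ> s \<circ> inv k) ((k \<circ> s \<circ> inv k) p) = p" for p
    by (simp add: permutes_inverses[OF k] ss)
  show "(k \<circ> s \<circ> inv k) p \<noteq> p" if "p \<in> S" for p
  proof
    assume "(k \<circ> s \<circ> inv k) p = p"
    then have "s (inv k p) = inv k p"
      by (metis comp_apply permutes_inverses(2)[OF k])
    moreover have "inv k p \<in> S"
      using that permutes_in_image[OF permutes_inv[OF k]] by blast
    ultimately show False using fpf by blast
  qed
qed

lemma commuting_fpf_involutions_conjugate:
  fixes s y :: "'a::linorder \<Rightarrow> 'a"
  assumes s: "fpf_involution_on S s" and y: "fpf_involution_on S y" and comm: "s \<circ> y = y \<circ> s"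
  obtains w where "w permutes S" "w \<circ> s = y \<circ> w" "w \<circ> y = s \<circ> w"
proof -
  have ss: "s (s p) = p" and yy: "y (y p) = p" and ys: "y (s p) = s (y p)" for p
    using s y comm by (auto simp: fpf_involution_on_def fun_eq_iff)
  have s_fix: "s p = p" and y_fix: "y p = p" if "p \<notin> S" for p
    using s y that by (auto simp: fpf_involution_on_def permutes_not_in)
  \<comment> \<open>The orbit {p, s p, y p, s (y p)} splits into the pairs {p, s (y p)} and {s p, y p}:
     w fixes the pair containing the least element of the orbit and swaps the other one.\<close>
  define D where "D p \<longleftrightarrow> min p (s (y p)) < min (s p) (y p)" for p
  define w where "w p = (if D p then p else s (y p))" for p
  have D_sy: "D (s (y p)) \<longleftrightarrow> D p" for p
    unfolding D_def by (simp add: ss yy ys min.commute)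
  have D_s: "D (s p) \<longleftrightarrow> \<not> D p" if "p \<in> S" for p
  proof -
    have "y p \<in> S"
      using that y by (auto simp: fpf_involution_on_def permutes_in_image)
    then have "p \<noteq> s p" "p \<noteq> y p" "s (y p) \<noteq> s p" "s (y p) \<noteq> y p"
      using that s y by (auto simp: fpf_involution_on_def) (metis ss)
    then have "min p (s (y p)) \<noteq> min (s p) (y p)"
      by (auto simp: min_def)
    moreover have "D (s p) \<longleftrightarrow> min (s p) (y p) < min p (s (y p))"
      unfolding D_def by (simp add: ss ys)
    ultimately show ?thesis
      unfolding D_def by (meson less_asym linorder_neqE)
  qed
  have ww: "w (w p) = p" for p
    by (simp add: w_def D_sy ss yy ys)
  have ws: "w (s p) = y (w p)" for p
  proof (cases "p \<in> S")
    case True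
    then show ?thesis
      by (simp add: w_def D_s ss yy ys)
  next
    case False
    then show ?thesis
      by (simp add: w_def s_fix y_fix)
  qed
  show thesis
  proof
    show "w permutes S"
      by (rule involution_permutes[OF ww]) (simp add: w_def s_fix y_fix)
    show "w \<circ> s = y \<circ> w"
      by (simp add: fun_eq_iff ws)
    show "w \<circ> y = s \<circ> w"
      by (simp add: fun_eq_iff) (metis ws ww)
  qed
qed

lemma comp_in_centralizer:
  assumes "a \<in> centralizer {p. p permutes S} s" and "b \<in> centralizer {p. p permutes S} s"
  shows "a \<circ> b \<in> centralizer {p. p permutes S} s"
  using assms unfolding centralizer_def
  by (auto intro: permutes_compose) (metis comp_assoc)

lemma inv_in_centralizer:
  assumes "a \<in> centralizer {p. p permutes S} s"
  shows "inv a \<in> centralizer {p. p permutes S} s"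
proof -
  have a: "a permutes S" and "a \<circ> s = s \<circ> a"
    using assms by (auto simp: centralizer_def)
  then have "inv a \<circ> s = s \<circ> inv a"
    by (metis comp_assoc comp_id id_comp permutes_inv_o[OF a])
  with a show ?thesis
    by (simp add: centralizer_def permutes_inv)
qed

lemma mult_on_centralizer_conj_eq:
  fixes \<rho> :: "('a \<Rightarrow> 'a) \<Rightarrow> 'b::comm_monoid_mult"
  assumes hom: "\<forall>x \<in> centralizer {p. p permutes S} s. \<forall>y \<in> centralizer {p. p permutes S} s.
                  \<rho> (x \<circ> y) = \<rho> x * \<rho> y"
    and \<rho>_id: "\<rho> id = 1"
    and c: "c \<in> centralizer {p. p permutes S} s" and x: "x \<in> centralizer {p. p permutes S} s"
  shows "\<rho> (c \<circ> x \<circ> inv c) = \<rho> x"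
proof -
  have ic: "inv c \<in> centralizer {p. p permutes S} s"
    using c by (rule inv_in_centralizer)
  have "c permutes S"
    using c by (simp add: centralizer_def)
  then have "\<rho> c * \<rho> (inv c) = 1"
    using hom c ic \<rho>_id by (metis permutes_inv_o(1))
  moreover have "\<rho> (c \<circ> x \<circ> inv c) = \<rho> x * (\<rho> c * \<rho> (inv c))"
    using hom c x ic comp_in_centralizer[OF c x] by (simp add: mult_ac)
  ultimately show ?thesis
    by simp
qed

lemma conj_of_commuting_conj_in_centralizer:
  assumes s: "s permutes S" and g: "g permutes S" and h: "h permutes S"
    and t: "g \<circ> s \<circ> inv g = t" and u: "h \<circ> s \<circ> inv h = u" and tu: "t \<circ> u = u \<circ> t"
  shows "inv h \<circ> t \<circ> h \<in> centralizer {p. p permutes S} s"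
proof -
  have hs: "h \<circ> s = u \<circ> h" and sh: "inv h \<circ> u = s \<circ> inv h"
    unfolding u[symmetric] by (auto simp: fun_eq_iff permutes_inverses[OF h])
  have "inv h \<circ> t \<circ> h \<circ> s = inv h \<circ> (t \<circ> u) \<circ> h"
    by (simp add: comp_assoc hs)
  also have "\<dots> = s \<circ> (inv h \<circ> t \<circ> h)"
    by (metis comp_assoc sh tu)
  finally show ?thesis
    using s g h t[symmetric] by (auto simp: centralizer_def intro!: permutes_compose permutes_inv)
qed

lemma swapped_conj_conjugate_in_centralizer:
  fixes s :: "'a::linorder \<Rightarrow> 'a"
  assumes s: "fpf_involution_on S s" and g: "g permutes S" and h: "h permutes S"
    and t: "g \<circ> s \<circ> inv g = t" and u: "h \<circ> s \<circ> inv h = u" and tu: "t \<circ> u = u \<circ> t"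
  obtains c where "c \<in> centralizer {p. p permutes S} s"
    and "inv g \<circ> u \<circ> g = c \<circ> (inv h \<circ> t \<circ> h) \<circ> inv c"
proof -
  define Y where "Y = inv h \<circ> t \<circ> h"
  have s_perm: "s permutes S"
    using s by (simp add: fpf_involution_on_def)
  have "fpf_involution_on S (inv h \<circ> t \<circ> inv (inv h))"
    unfolding t[symmetric] by (intro fpf_involution_on_conj s g permutes_inv h)
  then have Y_fpf: "fpf_involution_on S Y"
    by (simp add: Y_def permutes_inv_inv[OF h])
  have "Y \<in> centralizer {p. p permutes S} s"
    unfolding Y_def by (rule conj_of_commuting_conj_in_centralizer[OF s_perm g h t u tu])
  then have "s \<circ> Y = Y \<circ> s"
    by (simp add: centralizer_def)
  then obtain w where w: "w permutes S" "w \<circ> s = Y \<circ> w" "w \<circ> Y = s \<circ> w"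
    using commuting_fpf_involutions_conjugate[OF s Y_fpf] by blast
  have ws: "w (s p) = Y (w p)" and wY: "w (Y p) = s (w p)" for p
    using w(2,3) by (metis comp_apply)+
  define c where "c = inv g \<circ> h \<circ> w"
  have c_perm: "c permutes S"
    unfolding c_def by (intro permutes_compose permutes_inv g h w(1))
  have "c \<circ> s = s \<circ> c"
    by (simp add: fun_eq_iff c_def ws Y_def t[symmetric] permutes_inverses[OF g] permutes_inverses[OF h])
  with c_perm have c: "c \<in> centralizer {p. p permutes S} s"
    by (simp add: centralizer_def)
  have "(inv g \<circ> u \<circ> g) \<circ> c = c \<circ> Y"
    by (simp add: fun_eq_iff c_def wY u[symmetric] permutes_inverses[OF g] permutes_inverses[OF h])
  then have "inv g \<circ> u \<circ> g = c \<circ> Y \<circ> inv c"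
    by (metis comp_assoc comp_id permutes_inv_o(1)[OF c_perm])
  with c show thesis
    unfolding Y_def by (rule that)
qed

lemma negative_braiding_of_fpf_involution:
  fixes s :: "'a::linorder \<Rightarrow> 'a" and \<rho> :: "('a \<Rightarrow> 'a) \<Rightarrow> complex"
  assumes s: "fpf_involution_on S s"
    and hom: "\<forall>x \<in> centralizer {p. p permutes S} s. \<forall>y \<in> centralizer {p. p permutes S} s.
                \<rho> (x \<circ> y) = \<rho> x * \<rho> y"
    and \<rho>_s: "\<rho> s = -1"
  shows "negative_braiding {p. p permutes S} s \<rho>"
proof -
  have s_perm: "s permutes S" and ss: "s (s p) = p" for p
    using s by (auto simp: fpf_involution_on_def)
  then have "s \<in> centralizer {p. p permutes S} s" and "s \<circ> s = id"
    by (auto simp: centralizer_def fun_eq_iff)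
  with hom \<rho>_s have \<rho>_id: "\<rho> id = 1"
    by (metis mult_minus1 minus_minus)
  show ?thesis
    unfolding negative_braiding_def
  proof (intro conjI ballI impI)
    fix t g
    assume "g \<in> {p. p permutes S}" and t: "g \<circ> s \<circ> inv g = t"
    then have "inv g \<circ> t \<circ> g = s"
      unfolding t[symmetric] by (simp add: fun_eq_iff permutes_inverses)
    with \<rho>_s show "\<rho> (inv g \<circ> t \<circ> g) = -1"
      by simp
  next
    fix t u g h
    assume g: "g \<in> {p. p permutes S}" and h: "h \<in> {p. p permutes S}" and tu: "t \<circ> u = u \<circ> t"
      and t: "g \<circ> s \<circ> inv g = t" and u: "h \<circ> s \<circ> inv h = u"
    define Y where "Y = inv h \<circ> t \<circ> h"
    have Y: "Y \<in> centralizer {p. p permutes S} s"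
      using g h unfolding Y_def
      by (intro conj_of_commuting_conj_in_centralizer[OF s_perm _ _ t u tu]) simp_all
    obtain c where c: "c \<in> centralizer {p. p permutes S} s"
      and Z: "inv g \<circ> u \<circ> g = c \<circ> Y \<circ> inv c"
      using g h swapped_conj_conjugate_in_centralizer[OF s _ _ t u tu] unfolding Y_def by auto
    have "\<rho> (inv g \<circ> u \<circ> g) = \<rho> Y"
      unfolding Z by (rule mult_on_centralizer_conj_eq[OF hom \<rho>_id c Y])
    moreover have "Y \<circ> Y = id"
      using g h unfolding Y_def t[symmetric] by (simp add: fun_eq_iff permutes_inverses ss)
    then have "\<rho> Y * \<rho> Y = 1"
      using hom Y \<rho>_id by metis
    ultimately show "\<rho> (inv h \<circ> t \<circ> h) * \<rho> (inv g \<circ> u \<circ> g) = 1"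
      by (simp add: Y_def)
  qed
qed

lemma foldr_Aperm_comp:
  "foldr (\<lambda>i f. Aperm i \<circ> f) xs g = foldr (\<lambda>i f. Aperm i \<circ> f) xs id \<circ> g"
  by (induction xs) auto

lemma piperm_Suc: "piperm (Suc n) = piperm n \<circ> Aperm (Suc n)"
  using foldr_Aperm_comp[of "[1..<n+1]" "Aperm (Suc n)"] by (simp add: piperm_def)

lemma piperm_apply:
  "piperm n p = (if p \<in> {1..2*n} then if odd p then p + 1 else p - 1 else p)"
proof (induction n arbitrary: p)
  case 0
  then show ?case
    by (simp add: piperm_def)
next
  case (Suc n)
  then show ?case
    by (cases "p = 2*n+1"; cases "p = 2*n+2") (auto simp: piperm_Suc Aperm_def transpose_def)
qed

lemma odd_le_imp_Suc_le: "odd (p::nat) \<Longrightarrow> p \<le> 2*n \<Longrightarrow> Suc p \<le> 2*n"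
  by presburger

lemma fpf_involution_on_piperm: "fpf_involution_on {1..2*n} (piperm n)"
proof -
  have inv: "piperm n (piperm n p) = p" for p
    by (cases "p \<in> {1..2*n}"; cases "odd p") (auto simp: piperm_apply odd_le_imp_Suc_le)
  have fix_iff: "piperm n p = p \<longleftrightarrow> p \<notin> {1..2*n}" for p
    by (auto simp: piperm_apply)
  have "piperm n permutes {1..2*n}"
    using inv fix_iff by (blast intro: involution_permutes)
  with inv fix_iff show ?thesis
    by (simp add: fpf_involution_on_def)
qed

lemma Aperm_in_centralizer:
  assumes "i \<in> {1..n}"
  shows "Aperm i \<in> centralizer (Sym n) (piperm n)"
proof -
  have "Aperm i permutes {1..2*n}"
    unfolding Aperm_def using assms by (intro permutes_swap_id) auto
  moreover have "Aperm i (piperm n p) = piperm n (Aperm i p)" for p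
    using assms
    by (cases "p \<in> {1..2*n}"; cases "odd p";
        auto simp: piperm_apply Aperm_def transpose_def odd_le_imp_Suc_le; presburger)
  ultimately show ?thesis
    by (simp add: centralizer_def Sym_def fun_eq_iff)
qed

lemma piperm_0: "piperm 0 = id"
  by (simp add: piperm_def)

lemma piperm_in_centralizer:
  "m \<le> n \<Longrightarrow> piperm m \<in> centralizer (Sym n) (piperm n)"
proof (induction m)
  case 0
  have "id \<in> centralizer (Sym n) (piperm n)"
    by (simp add: centralizer_def Sym_def permutes_id)
  then show ?case
    by (simp only: piperm_0)
next
  case (Suc m)
  then have "piperm m \<in> centralizer (Sym n) (piperm n)"
    and "Aperm (Suc m) \<in> centralizer (Sym n) (piperm n)"
    by (simp_all add: Aperm_in_centralizer)
  then show ?case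
    unfolding piperm_Suc Sym_def by (rule comp_in_centralizer)
qed

lemma rho_piperm:
  fixes \<rho> :: "(nat \<Rightarrow> nat) \<Rightarrow> complex"
  assumes hom: "\<forall>x \<in> centralizer (Sym n) (piperm n). \<forall>y \<in> centralizer (Sym n) (piperm n).
                  \<rho> (x \<circ> y) = \<rho> x * \<rho> y"
    and A: "\<forall>i \<in> {1..n}. \<rho> (Aperm i) = -1" and \<rho>_id: "\<rho> id = 1"
  shows "m \<le> n \<Longrightarrow> \<rho> (piperm m) = (-1) ^ m"
proof (induction m)
  case 0
  show ?case
    by (simp only: piperm_0 \<rho>_id power_0)
next
  case (Suc m)
  then have "\<rho> (piperm (Suc m)) = \<rho> (piperm m) * \<rho> (Aperm (Suc m))"
    unfolding piperm_Suc using hom piperm_in_centralizer Aperm_in_centralizer by simp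
  with Suc A show ?case
    by simp
qed

theorem proposition2p4:
  fixes n :: nat and \<rho> :: "(nat \<Rightarrow> nat) \<Rightarrow> complex"
  assumes "odd n" and "n \<ge> 2"
    and hom: "\<forall>x \<in> centralizer (Sym n) (piperm n). \<forall>y \<in> centralizer (Sym n) (piperm n).
                \<rho> (x \<circ> y) = \<rho> x * \<rho> y"
    and A: "\<forall>i \<in> {1..n}. \<rho> (Aperm i) = -1"
    and B: "(\<forall>j \<in> {1..<n}. \<rho> (Bperm j) = 1) \<or> (\<forall>j \<in> {1..<n}. \<rho> (Bperm j) = -1)"
  shows "negative_braiding (Sym n) (piperm n) \<rho>"
proof -
  have "1 \<in> {1..n}"
    using \<open>n \<ge> 2\<close> by simp
  then have "Aperm 1 \<in> centralizer (Sym n) (piperm n)" and "\<rho> (Aperm 1) = -1"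
    using A by (simp_all add: Aperm_in_centralizer)
  moreover have "Aperm 1 \<circ> Aperm 1 = id"
    by (simp add: Aperm_def fun_eq_iff transpose_def)
  ultimately have \<rho>_id: "\<rho> id = 1"
    using hom by (metis mult_minus1 minus_minus)
  from rho_piperm[OF hom A \<rho>_id, of n] \<open>odd n\<close> have "\<rho> (piperm n) = -1"
    by simp
  then show ?thesis
    unfolding Sym_def
    by (rule negative_braiding_of_fpf_involution[OF fpf_involution_on_piperm hom[unfolded Sym_def]])
qed

end
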